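(* Let $R$ be a Bézout ring of Krull dimension at most one whose space of minimal prime ideals $\mathrm{MinSpec}(R)$ (with the Zariski topology) is compact. Then $R$ is a Kaplansky ring.
   Context: All rings are commutative with identity. $R$ is Bézout if every finitely generated ideal is principal. $R$ is a Kaplansky ring (elementary divisor ring) if for every matrix $A$ with entries in $R$ there exist invertible matrices $P,Q$ and a diagonal matrix $D$ with entries in $R$ such that $PAQ=D$. *)

theory Defs
  imports "HOL-Analysis.Analysis" "Jordan_Normal_Form.Matrix"
begin

definition cr_ideal :: "'a::comm_ring_1 set \<Rightarrow> bool" where
  "cr_ideal I \<longleftrightarrow> 0 \<in> I \<and> (\<forall>x\<in>I. \<forall>y\<in>I. x + y \<in> I) \<and> (\<forall>r. \<forall>x\<in>I. r * x \<in> I)"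

definition cr_prime_ideal :: "'a::comm_ring_1 set \<Rightarrow> bool" where
  "cr_prime_ideal P \<longleftrightarrow> cr_ideal P \<and> P \<noteq> UNIV \<and> (\<forall>x y. x * y \<in> P \<longrightarrow> x \<in> P \<or> y \<in> P)"

definition cr_minimal_prime :: "'a::comm_ring_1 set \<Rightarrow> bool" where
  "cr_minimal_prime P \<longleftrightarrow> cr_prime_ideal P \<and> (\<forall>Q. cr_prime_ideal Q \<and> Q \<subseteq> P \<longrightarrow> Q = P)"

definition Spec :: "'a::comm_ring_1 set set" where
  "Spec = {P. cr_prime_ideal P}"

definition MinSpec :: "'a::comm_ring_1 set set" where
  "MinSpec = {P. cr_minimal_prime P}"

definition zariski_topology :: "'a::comm_ring_1 set topology" where
  "zariski_topology = topology_generated_by (range (\<lambda>a. {P \<in> Spec. a \<notin> P}))"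

definition krull_dim_le_one :: "'a::comm_ring_1 itself \<Rightarrow> bool" where
  "krull_dim_le_one _ \<longleftrightarrow>
     \<not> (\<exists>P Q S :: 'a set. cr_prime_ideal P \<and> cr_prime_ideal Q \<and> cr_prime_ideal S \<and> P \<subset> Q \<and> Q \<subset> S)"

definition ideal_generated :: "'a::comm_ring_1 set \<Rightarrow> 'a set" where
  "ideal_generated X = \<Inter>{I. cr_ideal I \<and> X \<subseteq> I}"

definition principal_ideal :: "'a::comm_ring_1 set \<Rightarrow> bool" where
  "principal_ideal I \<longleftrightarrow> (\<exists>a. I = {r * a | r. True})"

definition bezout_ring :: "'a::comm_ring_1 itself \<Rightarrow> bool" where
  "bezout_ring _ \<longleftrightarrow> (\<forall>X :: 'a set. finite X \<longrightarrow> principal_ideal (ideal_generated X))"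

definition kaplansky_ring :: "'a::comm_ring_1 itself \<Rightarrow> bool" where
  "kaplansky_ring _ \<longleftrightarrow> (\<forall>m n. \<forall>A :: 'a mat. A \<in> carrier_mat m n \<longrightarrow>
     (\<exists>P Q. P \<in> carrier_mat m m \<and> Q \<in> carrier_mat n n \<and> invertible_mat P \<and> invertible_mat Q
        \<and> diagonal_mat (P * A * Q)))"

end

(* By Kaplansky's criterion a Hermite ring is an elementary divisor ring as soon as
   every primitive matrix A (one whose entries generate the unit ideal) represents one, that is
   u A v = 1 for suitable vectors u and v; contracting rows reduces this to 2 x 2 matrices.
   Both the Hermite property and the 2 x 2 case rest on a stable-range step: if z lies in no
   minimal prime, then in dimension at most one every prime containing z is minimal over zR, so
   R/zR is zero-dimensional and every unimodular row (p, q, z) shortens to a unimodular pair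
   (p + q t, z).  Elements outside all minimal primes are produced from compactness of MinSpec:
   together with the Bezout property it yields, for each a, an element b with a^N b = 0 that lies
   outside every minimal prime containing a. *)

theory Submission
  imports Defs
begin

section \<open>Ideals and prime ideals\<close>

lemma ideal_zero: "cr_ideal I \<Longrightarrow> 0 \<in> I"
  and ideal_add: "cr_ideal I \<Longrightarrow> x \<in> I \<Longrightarrow> y \<in> I \<Longrightarrow> x + y \<in> I"
  and ideal_mult_left: "cr_ideal I \<Longrightarrow> x \<in> I \<Longrightarrow> r * x \<in> I"
  unfolding cr_ideal_def by auto

lemma ideal_mult_right: "cr_ideal I \<Longrightarrow> x \<in> I \<Longrightarrow> x * r \<in> I"
  using ideal_mult_left[of I x r] by (simp add: mult.commute)

lemma ideal_diff: "cr_ideal I \<Longrightarrow> x \<in> I \<Longrightarrow> y \<in> I \<Longrightarrow> x - y \<in> I"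
  using ideal_add[of I x "(-1) * y"] ideal_mult_left[of I y "-1"] by simp

lemma ideal_eq_UNIV: "cr_ideal I \<Longrightarrow> 1 \<in> I \<Longrightarrow> I = UNIV"
  using ideal_mult_right[of I 1] by auto

lemma ideal_add_notin:
  assumes I: "cr_ideal I" and "x \<in> I \<longleftrightarrow> y \<notin> I"
  shows "x + y \<notin> I"
proof
  assume sum: "x + y \<in> I"
  have "(x + y) - x \<in> I" if "x \<in> I"
    using ideal_diff[OF I sum that] .
  moreover have "(x + y) - y \<in> I" if "y \<in> I"
    using ideal_diff[OF I sum that] .
  ultimately show False
    using assms(2) by auto
qed

lemma cr_ideal_zero: "cr_ideal {0}"
  unfolding cr_ideal_def by simp

lemma cr_ideal_sum:
  assumes I: "cr_ideal I" and J: "cr_ideal J"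
  shows "cr_ideal {x + y | x y. x \<in> I \<and> y \<in> J}"
  unfolding cr_ideal_def
proof (intro conjI ballI allI)
  show "0 \<in> {x + y | x y. x \<in> I \<and> y \<in> J}"
    using ideal_zero[OF I] ideal_zero[OF J] by force
next
  fix a b assume "a \<in> {x + y | x y. x \<in> I \<and> y \<in> J}" "b \<in> {x + y | x y. x \<in> I \<and> y \<in> J}"
  then obtain x1 y1 x2 y2 where "a = x1 + y1" "b = x2 + y2" "x1 \<in> I" "x2 \<in> I" "y1 \<in> J" "y2 \<in> J"
    by blast
  moreover from this have "a + b = (x1 + x2) + (y1 + y2)"
    by (simp add: algebra_simps)
  ultimately show "a + b \<in> {x + y | x y. x \<in> I \<and> y \<in> J}"
    using ideal_add[OF I] ideal_add[OF J] by blast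
next
  fix c a assume "a \<in> {x + y | x y. x \<in> I \<and> y \<in> J}"
  then obtain x y where "a = x + y" "x \<in> I" "y \<in> J"
    by blast
  moreover from this have "c * a = c * x + c * y"
    by (simp add: algebra_simps)
  ultimately show "c * a \<in> {x + y | x y. x \<in> I \<and> y \<in> J}"
    using ideal_mult_left[OF I] ideal_mult_left[OF J] by blast
qed

lemma cr_ideal_multiples: "cr_ideal {r * a | r. True}"
  unfolding cr_ideal_def
proof (intro conjI ballI allI)
  have "0 = 0 * a"
    by simp
  then show "0 \<in> {r * a | r. True}"
    by blast
next
  fix x y assume "x \<in> {r * a | r. True}" "y \<in> {r * a | r. True}"
  then obtain r s where "x + y = (r + s) * a"
    by (auto simp: distrib_right)
  then show "x + y \<in> {r * a | r. True}"
    by blast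
next
  fix c x assume "x \<in> {r * a | r. True}"
  then obtain r where "c * x = (c * r) * a"
    by (auto simp: mult.assoc)
  then show "c * x \<in> {r * a | r. True}"
    by blast
qed

lemma cr_ideal_sum_multiples:
  assumes "cr_ideal I"
  shows "cr_ideal {x + r * a | x r. x \<in> I}"
proof -
  have "{x + r * a | x r. x \<in> I} = {x + y | x y. x \<in> I \<and> y \<in> {r * a | r. True}}"
    by blast
  then show ?thesis
    using cr_ideal_sum[OF assms cr_ideal_multiples] by simp
qed

lemma cr_ideal_linear_combinations: "cr_ideal {u * a + v * b | u v. True}"
proof -
  have "{u * a + v * b | u v. True} = {x + v * b | x v. x \<in> {u * a | u. True}}"
    by blast
  then show ?thesis
    using cr_ideal_sum_multiples[OF cr_ideal_multiples] by simp
qed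

lemma cr_ideal_saturation:
  assumes J: "cr_ideal J"
  shows "cr_ideal {s. \<exists>n. s * a ^ n \<in> J}"
  unfolding cr_ideal_def
proof (intro conjI ballI allI)
  show "0 \<in> {s. \<exists>n. s * a ^ n \<in> J}"
    using ideal_zero[OF J] by simp
next
  fix x y assume "x \<in> {s. \<exists>n. s * a ^ n \<in> J}" "y \<in> {s. \<exists>n. s * a ^ n \<in> J}"
  then obtain m n where "x * a ^ m \<in> J" "y * a ^ n \<in> J"
    by blast
  moreover have "(x + y) * a ^ (m + n) = (x * a ^ m) * a ^ n + (y * a ^ n) * a ^ m"
    by (simp add: power_add algebra_simps)
  ultimately have "(x + y) * a ^ (m + n) \<in> J"
    using J by (simp add: ideal_add ideal_mult_right)
  then show "x + y \<in> {s. \<exists>n. s * a ^ n \<in> J}"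
    by blast
next
  fix c x assume "x \<in> {s. \<exists>n. s * a ^ n \<in> J}"
  then obtain n where "x * a ^ n \<in> J"
    by blast
  then have "(c * x) * a ^ n \<in> J"
    using ideal_mult_left[OF J] by (simp add: mult.assoc)
  then show "c * x \<in> {s. \<exists>n. s * a ^ n \<in> J}"
    by blast
qed

lemma prime_ideal_ideal: "cr_prime_ideal P \<Longrightarrow> cr_ideal P"
  unfolding cr_prime_ideal_def by simp

lemma prime_ideal_one: "cr_prime_ideal P \<Longrightarrow> 1 \<notin> P"
  unfolding cr_prime_ideal_def using ideal_eq_UNIV by blast

lemma prime_ideal_mult_iff:
  assumes "cr_prime_ideal P"
  shows "x * y \<in> P \<longleftrightarrow> x \<in> P \<or> y \<in> P"
  using assms ideal_mult_left[of P] ideal_mult_right[of P] unfolding cr_prime_ideal_def by blast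

lemma prime_ideal_power_iff:
  assumes "cr_prime_ideal P"
  shows "x ^ n \<in> P \<longleftrightarrow> x \<in> P \<and> n > 0"
  by (induction n) (auto simp: prime_ideal_mult_iff[OF assms] prime_ideal_one[OF assms])

lemma prime_ideal_zero: "cr_prime_ideal P \<Longrightarrow> 0 \<in> P"
  using ideal_zero prime_ideal_ideal by blast

lemma cr_ideal_Union_chain:
  assumes "C \<noteq> {}" and ideals: "\<And>I. I \<in> C \<Longrightarrow> cr_ideal I" and "chain\<^sub>\<subseteq> C"
  shows "cr_ideal (\<Union>C)"
  unfolding cr_ideal_def
proof (intro conjI ballI allI)
  show "0 \<in> \<Union>C"
    using \<open>C \<noteq> {}\<close> ideals ideal_zero by blast
next
  fix x y assume "x \<in> \<Union>C" "y \<in> \<Union>C"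
  then obtain I J where "I \<in> C" "J \<in> C" "x \<in> I" "y \<in> J"
    by blast
  moreover have "I \<subseteq> J \<or> J \<subseteq> I"
    using \<open>chain\<^sub>\<subseteq> C\<close> \<open>I \<in> C\<close> \<open>J \<in> C\<close> unfolding chain_subset_def by blast
  ultimately show "x + y \<in> \<Union>C"
    using ideals ideal_add by blast
next
  fix r x assume "x \<in> \<Union>C"
  then show "r * x \<in> \<Union>C"
    using ideals ideal_mult_left by blast
qed

lemma maximal_ideal_avoiding_is_prime:
  assumes M: "cr_ideal M" "M \<inter> S = {}"
    and S: "1 \<in> S" "\<And>x y. x \<in> S \<Longrightarrow> y \<in> S \<Longrightarrow> x * y \<in> S"
    and maximal: "\<And>J. cr_ideal J \<Longrightarrow> M \<subseteq> J \<Longrightarrow> J \<inter> S = {} \<Longrightarrow> J = M"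
  shows "cr_prime_ideal M"
proof -
  have meets_S: "\<exists>m\<in>M. \<exists>r. m + r * z \<in> S" if "z \<notin> M" for z
  proof -
    let ?J = "{m + r * z | m r. m \<in> M}"
    have "m = m + 0 * z" "z = 0 + 1 * z" for m
      by simp_all
    then have "M \<subseteq> ?J" "z \<in> ?J"
      using ideal_zero[OF M(1)] by blast+
    then have "?J \<inter> S \<noteq> {}"
      using maximal[OF cr_ideal_sum_multiples[OF M(1)]] \<open>z \<notin> M\<close> by blast
    then show ?thesis
      by blast
  qed
  have "x \<in> M \<or> y \<in> M" if "x * y \<in> M" for x y
  proof (rule ccontr)
    assume "\<not> (x \<in> M \<or> y \<in> M)"
    then obtain m1 r1 m2 r2 where m: "m1 \<in> M" "m2 \<in> M"
      and in_S: "m1 + r1 * x \<in> S" "m2 + r2 * y \<in> S"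
      using meets_S by meson
    have "(m1 + r1 * x) * (m2 + r2 * y) = m1 * (m2 + r2 * y) + m2 * (r1 * x) + (r1 * r2) * (x * y)"
      by (simp add: algebra_simps)
    also have "\<dots> \<in> M"
      using M(1) m \<open>x * y \<in> M\<close> by (meson ideal_add ideal_mult_left ideal_mult_right)
    finally show False
      using S(2)[OF in_S] M(2) by blast
  qed
  then show ?thesis
    unfolding cr_prime_ideal_def using M S(1) by blast
qed

lemma prime_ideal_avoiding:
  assumes I: "cr_ideal I" "I \<inter> S = {}"
    and S: "1 \<in> S" "\<And>x y. x \<in> S \<Longrightarrow> y \<in> S \<Longrightarrow> x * y \<in> S"
  shows "\<exists>P. cr_prime_ideal P \<and> I \<subseteq> P \<and> P \<inter> S = {}"
proof -
  define \<A> where "\<A> = {J. cr_ideal J \<and> I \<subseteq> J \<and> J \<inter> S = {}}"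
  have "\<exists>U\<in>\<A>. \<forall>J\<in>C. J \<subseteq> U" if "C \<in> chains \<A>" for C
  proof (cases "C = {}")
    case True
    then show ?thesis
      using I unfolding \<A>_def by blast
  next
    case False
    have "C \<subseteq> \<A>" "chain\<^sub>\<subseteq> C"
      using \<open>C \<in> chains \<A>\<close> unfolding chains_def by auto
    then have "\<Union>C \<in> \<A>"
      using cr_ideal_Union_chain[OF False] False unfolding \<A>_def by blast
    then show ?thesis
      by blast
  qed
  then obtain M where "M \<in> \<A>" and maximal: "\<forall>J\<in>\<A>. M \<subseteq> J \<longrightarrow> J = M"
    using Zorn_Lemma2[of \<A>] by blast
  then have "cr_ideal M" "I \<subseteq> M" "M \<inter> S = {}"
    unfolding \<A>_def by auto
  moreover have "cr_prime_ideal M"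
    using maximal_ideal_avoiding_is_prime[OF \<open>cr_ideal M\<close> \<open>M \<inter> S = {}\<close> S] maximal
      \<open>I \<subseteq> M\<close> unfolding \<A>_def by blast
  ultimately show ?thesis
    by blast
qed

lemma prime_ideal_containing:
  assumes "cr_ideal I" "1 \<notin> I"
  shows "\<exists>P. cr_prime_ideal P \<and> I \<subseteq> P"
  using prime_ideal_avoiding[of I "{1}"] assms by auto

lemma unit_combination_if_no_common_prime:
  assumes "\<And>P. cr_prime_ideal P \<Longrightarrow> a \<in> P \<Longrightarrow> b \<in> P \<Longrightarrow> False"
  shows "\<exists>u v. u * a + v * b = 1"
proof (rule ccontr)
  let ?L = "{u * a + v * b | u v. True}"
  assume "\<nexists>u v. u * a + v * b = 1"
  then obtain P where "cr_prime_ideal P" "?L \<subseteq> P"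
    using prime_ideal_containing[OF cr_ideal_linear_combinations] by force
  moreover have "a = 1 * a + 0 * b" "b = 0 * a + 1 * b"
    by simp_all
  then have "a \<in> ?L" "b \<in> ?L"
    by blast+
  ultimately show False
    using assms by blast
qed

section \<open>Minimal prime ideals\<close>

definition minimal_prime_over :: "'a::comm_ring_1 set \<Rightarrow> 'a set \<Rightarrow> bool" where
  "minimal_prime_over J Q \<longleftrightarrow>
     cr_prime_ideal Q \<and> J \<subseteq> Q \<and> (\<forall>Q'. cr_prime_ideal Q' \<and> J \<subseteq> Q' \<and> Q' \<subseteq> Q \<longrightarrow> Q' = Q)"

lemma minimal_prime_over_zero: "cr_minimal_prime P \<longleftrightarrow> minimal_prime_over {0} P"
  unfolding cr_minimal_prime_def minimal_prime_over_def using prime_ideal_zero by blast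

lemma minimal_prime_prime: "cr_minimal_prime P \<Longrightarrow> cr_prime_ideal P"
  unfolding cr_minimal_prime_def by simp

lemma minimal_prime_over_witness:
  assumes Q: "minimal_prime_over J Q" and J: "cr_ideal J" and "x \<in> Q"
  shows "\<exists>s n. s \<notin> Q \<and> s * x ^ n \<in> J"
proof (rule ccontr)
  define S where "S = {s * x ^ n | s n. s \<notin> Q}"
  assume "\<nexists>s n. s \<notin> Q \<and> s * x ^ n \<in> J"
  then have "J \<inter> S = {}"
    unfolding S_def by blast
  have Q_prime: "cr_prime_ideal Q"
    using Q unfolding minimal_prime_over_def by blast
  have complement_in_S: "s \<in> S" if "s \<notin> Q" for s
  proof -
    have "s = s * x ^ 0"
      by simp
    then show ?thesis
      using that unfolding S_def by blast
  qed
  have "1 \<in> S"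
    using complement_in_S prime_ideal_one[OF Q_prime] by blast
  moreover have "a * b \<in> S" if ab: "a \<in> S" "b \<in> S" for a b
  proof -
    obtain s1 n1 s2 n2 where "a = s1 * x ^ n1" "b = s2 * x ^ n2" "s1 \<notin> Q" "s2 \<notin> Q"
      using ab unfolding S_def by blast
    moreover from this have "a * b = (s1 * s2) * x ^ (n1 + n2)" "s1 * s2 \<notin> Q"
      by (simp_all add: power_add algebra_simps prime_ideal_mult_iff[OF Q_prime])
    ultimately show ?thesis
      unfolding S_def by blast
  qed
  ultimately obtain P where P: "cr_prime_ideal P" "J \<subseteq> P" "P \<inter> S = {}"
    using prime_ideal_avoiding[OF J \<open>J \<inter> S = {}\<close>] by blast
  then have "P \<subseteq> Q"
    using complement_in_S by blast
  then have "P = Q"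
    using Q P unfolding minimal_prime_over_def by blast
  moreover have "x = 1 * x ^ 1"
    by simp
  then have "x \<in> S"
    using prime_ideal_one[OF Q_prime] unfolding S_def by blast
  ultimately show False
    using \<open>x \<in> Q\<close> P(3) by blast
qed

lemma minimal_prime_witness:
  assumes "cr_minimal_prime P" "x \<in> P"
  shows "\<exists>s n. s \<notin> P \<and> s * x ^ n = 0"
  using minimal_prime_over_witness[OF _ cr_ideal_zero] assms minimal_prime_over_zero by blast

section \<open>Bezout rings\<close>

lemma ideal_generated_least: "cr_ideal I \<Longrightarrow> X \<subseteq> I \<Longrightarrow> ideal_generated X \<subseteq> I"
  unfolding ideal_generated_def by blast

lemma ideal_generated_superset: "X \<subseteq> ideal_generated X"
  unfolding ideal_generated_def by blast

lemma bezout_ring_generator: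
  assumes "bezout_ring TYPE('a::comm_ring_1)" "finite (X :: 'a set)"
  obtains g where "g \<in> ideal_generated X" "\<And>x. x \<in> X \<Longrightarrow> \<exists>r. x = r * g"
proof -
  have "principal_ideal (ideal_generated X)"
    using assms unfolding bezout_ring_def by simp
  then obtain g where g: "ideal_generated X = {r * g | r. True}"
    unfolding principal_ideal_def by blast
  have "g = 1 * g"
    by simp
  then have "g \<in> ideal_generated X"
    unfolding g by blast
  moreover have "\<exists>r. x = r * g" if "x \<in> X" for x
    using ideal_generated_superset[of X] that unfolding g by blast
  ultimately show ?thesis
    using that by blast
qed

lemma bezout_ring_gcd:
  fixes a b :: "'a::comm_ring_1"
  assumes "bezout_ring TYPE('a)"
  obtains d u v x y where "d = u * a + v * b" "a = x * d" "b = y * d"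
proof -
  obtain d where d: "d \<in> ideal_generated {a, b}" and divides: "\<And>x. x \<in> {a, b} \<Longrightarrow> \<exists>r. x = r * d"
    using bezout_ring_generator[OF assms, of "{a, b}"] by blast
  have "a = 1 * a + 0 * b" "b = 0 * a + 1 * b"
    by simp_all
  then have "ideal_generated {a, b} \<subseteq> {u * a + v * b | u v. True}"
    by (intro ideal_generated_least cr_ideal_linear_combinations) blast
  then obtain u v where "d = u * a + v * b"
    using d by blast
  moreover obtain x y where "a = x * d" "b = y * d"
    using divides by blast
  ultimately show ?thesis
    using that by blast
qed

lemma bezout_ring_gcd_annihilator:
  fixes a b :: "'a::comm_ring_1"
  assumes "bezout_ring TYPE('a)"
  obtains d x y u v e where "a = x * d" "b = y * d" "d * e = 0" "u * x + v * y + e = 1"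
proof -
  obtain d u v x y where d: "d = u * a + v * b" "a = x * d" "b = y * d"
    using bezout_ring_gcd[OF assms] by blast
  define e where "e = 1 - u * x - v * y"
  have "d * e = d - u * a - v * b"
    by (simp add: e_def d(2,3) algebra_simps)
  also have "\<dots> = 0"
    by (simp add: d(1))
  finally have "d * e = 0" .
  moreover have "u * x + v * y + e = 1"
    by (simp add: e_def)
  ultimately show ?thesis
    using that d(2,3) by blast
qed

section \<open>Compactness of the minimal spectrum\<close>

definition outside_minimal_primes :: "'a::comm_ring_1 \<Rightarrow> bool" where
  "outside_minimal_primes z \<longleftrightarrow> (\<forall>P. cr_minimal_prime P \<longrightarrow> z \<notin> P)"

lemma compactin_MinSpec:
  assumes "compact_space (subtopology (zariski_topology :: 'a::comm_ring_1 set topology) MinSpec)"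
  shows "compactin (zariski_topology :: 'a set topology) MinSpec"
proof -
  have "(MinSpec :: 'a set set) \<subseteq> {P \<in> Spec. 1 \<notin> P}"
    unfolding MinSpec_def Spec_def using minimal_prime_prime prime_ideal_one by blast
  then have "topspace zariski_topology \<inter> MinSpec = (MinSpec :: 'a set set)"
    unfolding zariski_topology_def by auto
  then show ?thesis
    using assms by (simp add: compact_space_def compactin_subtopology)
qed

lemma minspec_finite_subcover:
  fixes T :: "'a::comm_ring_1 set"
  assumes compact: "compact_space (subtopology (zariski_topology :: 'a set topology) MinSpec)"
    and cover: "\<And>P. cr_minimal_prime P \<Longrightarrow> \<exists>t\<in>T. t \<notin> P"
  obtains T' where "finite T'" "T' \<subseteq> T" "\<And>P. cr_minimal_prime P \<Longrightarrow> \<exists>t\<in>T'. t \<notin> P"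
proof -
  define D where "D t = {P \<in> Spec. t \<notin> P}" for t :: 'a
  have "\<forall>V \<in> D ` T. openin zariski_topology V"
    unfolding zariski_topology_def D_def by (blast intro: topology_generated_by_Basis)
  moreover have "MinSpec \<subseteq> \<Union> (D ` T)"
    using cover minimal_prime_prime unfolding MinSpec_def Spec_def D_def by blast
  ultimately obtain \<F> where "finite \<F>" "\<F> \<subseteq> D ` T" "MinSpec \<subseteq> \<Union>\<F>"
    using compactin_MinSpec[OF compact] unfolding compactin_def by meson
  then obtain T' where T': "T' \<subseteq> T" "finite T'" "MinSpec \<subseteq> \<Union> (D ` T')"
    using finite_subset_image[of \<F> D T] by auto
  have "\<exists>t\<in>T'. t \<notin> P" if "cr_minimal_prime P" for P
    using that T'(3) unfolding MinSpec_def D_def by blast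
  then show ?thesis
    using that T' by blast
qed

text \<open>Compactness of \<open>MinSpec\<close> enters here: finitely many annihilators of powers of \<open>a\<close> already
  avoid every minimal prime containing \<open>a\<close>, and \<open>b\<close> generates the ideal they span.\<close>

lemma power_annihilator_outside_minimal_primes:
  fixes a :: "'a::comm_ring_1"
  assumes bezout: "bezout_ring TYPE('a)"
    and compact: "compact_space (subtopology (zariski_topology :: 'a set topology) MinSpec)"
  obtains b N where "a ^ N * b = 0" "\<And>P. cr_minimal_prime P \<Longrightarrow> a \<in> P \<Longrightarrow> b \<notin> P"
proof -
  define K where "K = {t. \<exists>n. t * a ^ n = 0}"
  have covers: "\<exists>t\<in>insert a K. t \<notin> P" if P: "cr_minimal_prime P" for P
  proof (cases "a \<in> P")
    case True
    then obtain s n where "s \<notin> P" "s * a ^ n = 0"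
      using minimal_prime_witness[OF P] by blast
    then show ?thesis
      unfolding K_def by blast
  qed blast
  obtain T' where "finite T'" "T' \<subseteq> insert a K"
    and cover: "\<And>P. cr_minimal_prime P \<Longrightarrow> \<exists>t\<in>T'. t \<notin> P"
    using minspec_finite_subcover[OF compact covers] by blast
  then obtain g where "g \<in> ideal_generated (T' \<inter> K)"
    and divides: "\<And>t. t \<in> T' \<inter> K \<Longrightarrow> \<exists>r. t = r * g"
    using bezout_ring_generator[OF bezout finite_Int] by blast
  moreover have "ideal_generated (T' \<inter> K) \<subseteq> K"
    using ideal_generated_least[OF cr_ideal_saturation[OF cr_ideal_zero, of a]]
    unfolding K_def by simp
  ultimately have "g \<in> K"
    by blast
  then obtain N where "g * a ^ N = 0"
    unfolding K_def by blast
  then have "a ^ N * g = 0"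
    by (simp add: mult.commute)
  moreover have "g \<notin> P" if P: "cr_minimal_prime P" "a \<in> P" for P
  proof -
    obtain t where "t \<in> T'" "t \<notin> P"
      using cover[OF P(1)] by blast
    then have "t \<in> T' \<inter> K"
      using \<open>T' \<subseteq> insert a K\<close> \<open>a \<in> P\<close> by blast
    then obtain r where "t = r * g"
      using divides by blast
    then show ?thesis
      using \<open>t \<notin> P\<close> ideal_mult_left[OF prime_ideal_ideal[OF minimal_prime_prime[OF P(1)]]]
      by blast
  qed
  ultimately show ?thesis
    using that by blast
qed

lemma exists_shift_outside_minimal_primes:
  fixes x g :: "'a::comm_ring_1"
  assumes bezout: "bezout_ring TYPE('a)"
    and compact: "compact_space (subtopology (zariski_topology :: 'a set topology) MinSpec)"
    and g: "\<And>P. cr_minimal_prime P \<Longrightarrow> x \<in> P \<Longrightarrow> g \<notin> P"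
  obtains c where "outside_minimal_primes (x + c * g)"
proof -
  obtain c N where ann: "x ^ N * c = 0" and c: "\<And>P. cr_minimal_prime P \<Longrightarrow> x \<in> P \<Longrightarrow> c \<notin> P"
    by (rule power_annihilator_outside_minimal_primes[OF bezout compact, of x]) (rule that)
  have "x + c * g \<notin> P" if "cr_minimal_prime P" for P
  proof (rule ideal_add_notin)
    have P: "cr_prime_ideal P"
      using that by (rule minimal_prime_prime)
    then show "cr_ideal P"
      by (rule prime_ideal_ideal)
    have "x ^ N * c \<in> P"
      using ann prime_ideal_zero[OF P] by simp
    then show "x \<in> P \<longleftrightarrow> c * g \<notin> P"
      using c g that by (auto simp: prime_ideal_mult_iff[OF P] prime_ideal_power_iff[OF P])
  qed
  then show ?thesis
    using that unfolding outside_minimal_primes_def by blast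
qed

section \<open>Rings of Krull dimension at most one\<close>

lemma minimal_prime_over_multiples:
  assumes dim: "krull_dim_le_one TYPE('a::comm_ring_1)" and z: "outside_minimal_primes (z :: 'a)"
    and Q: "cr_prime_ideal Q" "z \<in> Q"
  shows "minimal_prime_over {r * z | r. True} Q"
  unfolding minimal_prime_over_def
proof (intro conjI allI impI)
  show "{r * z | r. True} \<subseteq> Q"
    using ideal_mult_left[OF prime_ideal_ideal[OF Q(1)] Q(2)] by blast
next
  fix Q' assume Q': "cr_prime_ideal Q' \<and> {r * z | r. True} \<subseteq> Q' \<and> Q' \<subseteq> Q"
  have "z = 1 * z"
    by simp
  then have "\<not> cr_minimal_prime Q'"
    using z Q' unfolding outside_minimal_primes_def by blast
  then obtain Q'' where "cr_prime_ideal Q''" "Q'' \<subset> Q'"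
    using Q' unfolding cr_minimal_prime_def by blast
  show "Q' = Q"
  proof (rule ccontr)
    assume "Q' \<noteq> Q"
    then have "Q' \<subset> Q"
      using Q' by blast
    then show False
      using dim Q(1) Q' \<open>cr_prime_ideal Q''\<close> \<open>Q'' \<subset> Q'\<close> unfolding krull_dim_le_one_def by blast
  qed
qed (fact Q(1))

text \<open>The primes containing \<open>z\<close> are minimal over \<open>z R\<close>, so \<open>R/z R\<close> is zero-dimensional and
  the saturation of \<open>z R\<close> with respect to \<open>p\<close> is comaximal with \<open>p R + z R\<close>.\<close>

lemma saturation_comaximal:
  assumes dim: "krull_dim_le_one TYPE('a::comm_ring_1)" and z: "outside_minimal_primes (z :: 'a)"
  obtains u v s n k where "u * p + v * z + s = 1" "s * p ^ n = k * z"
proof -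
  define L where "L = {u * p + v * z | u v. True}"
  define S where "S = {s. \<exists>n. s * p ^ n \<in> {k * z | k. True}}"
  define I where "I = {x + s | x s. x \<in> L \<and> s \<in> S}"
  have "0 \<in> L" "0 \<in> S"
    unfolding L_def S_def
    by (rule ideal_zero[OF cr_ideal_linear_combinations], rule ideal_zero[OF cr_ideal_saturation[OF cr_ideal_multiples]])
  moreover have "x = x + 0" "x = 0 + x" for x :: 'a
    by simp_all
  ultimately have "L \<subseteq> I" "S \<subseteq> I"
    unfolding I_def by blast+
  have "cr_ideal I"
    unfolding I_def L_def S_def
    by (rule cr_ideal_sum[OF cr_ideal_linear_combinations cr_ideal_saturation[OF cr_ideal_multiples]])
  have "1 \<in> I"
  proof (rule ccontr)
    assume "1 \<notin> I"
    then obtain Q where Q: "cr_prime_ideal Q" "I \<subseteq> Q"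
      using prime_ideal_containing[OF \<open>cr_ideal I\<close>] by blast
    have "p = 1 * p + 0 * z" "z = 0 * p + 1 * z"
      by simp_all
    then have "p \<in> Q" "z \<in> Q"
      using \<open>L \<subseteq> I\<close> Q(2) unfolding L_def by blast+
    then obtain s n where "s \<notin> Q" "s * p ^ n \<in> {k * z | k. True}"
      using minimal_prime_over_witness[OF minimal_prime_over_multiples[OF dim z Q(1) \<open>z \<in> Q\<close>]
          cr_ideal_multiples \<open>p \<in> Q\<close>]
      by blast
    then show False
      using \<open>S \<subseteq> I\<close> Q(2) unfolding S_def by blast
  qed
  then obtain u v s n k where "1 = (u * p + v * z) + s" "s * p ^ n = k * z"
    unfolding I_def L_def S_def by blast
  then show ?thesis
    using that by simp
qed

text \<open>The shift is \<open>\<tau> = \<beta> s\<close>: at a prime containing \<open>z\<close>, the element \<open>q \<beta> s\<close> lies outside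
  the prime exactly when \<open>p\<close> lies inside it.\<close>

lemma unimodular_shift_outside_minimal_primes:
  assumes dim: "krull_dim_le_one TYPE('a::comm_ring_1)" and z: "outside_minimal_primes (z :: 'a)"
    and unimodular: "\<alpha> * p + \<beta> * q + \<gamma> * z = 1"
  obtains \<tau> a b where "a * (p + q * \<tau>) + b * z = 1"
proof -
  obtain u v s n k where one: "u * p + v * z + s = 1" and sat: "s * p ^ n = k * z"
    using saturation_comaximal[OF dim z] by blast
  have "p + q * (\<beta> * s) \<notin> M" if M: "cr_prime_ideal M" "z \<in> M" for M
  proof (rule ideal_add_notin[OF prime_ideal_ideal[OF M(1)]])
    have "\<beta> * q \<notin> M" if "p \<in> M"
    proof
      assume "\<beta> * q \<in> M"
      then have "\<alpha> * p + \<beta> * q + \<gamma> * z \<in> M"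
        using that M by (simp add: ideal_add ideal_mult_left prime_ideal_ideal)
      then show False
        using unimodular prime_ideal_one[OF M(1)] by simp
    qed
    moreover have "s \<notin> M" if "p \<in> M"
    proof
      assume "s \<in> M"
      then have "u * p + v * z + s \<in> M"
        using that M by (simp add: ideal_add ideal_mult_left prime_ideal_ideal)
      then show False
        using one prime_ideal_one[OF M(1)] by simp
    qed
    moreover have "s * p ^ n \<in> M"
      using sat M by (simp add: ideal_mult_left prime_ideal_ideal)
    ultimately show "p \<in> M \<longleftrightarrow> q * (\<beta> * s) \<notin> M"
      by (auto simp: prime_ideal_mult_iff[OF M(1)] prime_ideal_power_iff[OF M(1)] mult.commute)
  qed
  then obtain a b where "a * (p + q * (\<beta> * s)) + b * z = 1"
    using unit_combination_if_no_common_prime[of "p + q * (\<beta> * s)" z] by blast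
  then show ?thesis
    using that by blast
qed

section \<open>Hermite rings\<close>

definition hermite_ring :: "'a::comm_ring_1 itself \<Rightarrow> bool" where
  "hermite_ring _ \<longleftrightarrow> (\<forall>a b :: 'a. \<exists>d a' b' u v. a = d * a' \<and> b = d * b' \<and> u * a' + v * b' = 1)"

lemma hermite_ringE:
  fixes a b :: "'a::comm_ring_1"
  assumes "hermite_ring TYPE('a)"
  obtains d a' b' u v where "a = d * a'" "b = d * b'" "u * a' + v * b' = 1"
  using assms unfolding hermite_ring_def by blast

lemma hermite_common_factor:
  fixes f :: "'b \<Rightarrow> 'a::comm_ring_1"
  assumes hermite: "hermite_ring TYPE('a)" and "finite S" "S \<noteq> {}"
  obtains c f' l where "\<And>s. s \<in> S \<Longrightarrow> f s = c * f' s" "(\<Sum>s\<in>S. l s * f' s) = 1"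
  using assms(2,3)
proof (induction S arbitrary: thesis rule: finite_ne_induct)
  case (singleton x)
  show ?case
    by (rule singleton.prems[of "f x" "\<lambda>_. 1" "\<lambda>_. 1"]) simp_all
next
  case (insert x F)
  obtain c f' l where IH: "\<And>s. s \<in> F \<Longrightarrow> f s = c * f' s" "(\<Sum>s\<in>F. l s * f' s) = 1"
    using insert.IH by blast
  obtain d x' y' c1 c2 where H: "f x = d * x'" "c = d * y'" "c1 * x' + c2 * y' = 1"
    using hermite_ringE[OF hermite] by blast
  define f'' where "f'' s = (if s = x then x' else y' * f' s)" for s
  define l'' where "l'' s = (if s = x then c1 else c2 * l s)" for s
  have "f s = d * f'' s" if "s \<in> insert x F" for s
    using that IH(1) H insert.hyps unfolding f''_def by (auto simp: algebra_simps)
  moreover have "(\<Sum>s\<in>F. l'' s * f'' s) = (\<Sum>s\<in>F. (c2 * y') * (l s * f' s))"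
    using insert.hyps by (intro sum.cong) (auto simp: l''_def f''_def algebra_simps)
  then have "(\<Sum>s\<in>insert x F. l'' s * f'' s) = c1 * x' + (\<Sum>s\<in>F. (c2 * y') * (l s * f' s))"
    using insert.hyps by (simp add: l''_def f''_def)
  then have "(\<Sum>s\<in>insert x F. l'' s * f'' s) = 1"
    using IH(2) H(3) by (simp add: sum_distrib_left[symmetric])
  ultimately show ?case
    by (rule insert.prems)
qed

text \<open>Since \<open>d e = 0\<close>, the cofactors \<open>x, y\<close> of the gcd \<open>d\<close> may be changed by multiples of \<open>e\<close>.
  Adding a multiple of \<open>gcd(y, e)\<close> moves \<open>x\<close> off all minimal primes, and the stable-range step
  applied to the unimodular row \<open>(y, e, x)\<close> then makes the cofactors comaximal.\<close>

lemma bezout_krull_dim_le_one_hermite: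
  assumes bezout: "bezout_ring TYPE('a::comm_ring_1)" and dim: "krull_dim_le_one TYPE('a)"
    and compact: "compact_space (subtopology (zariski_topology :: 'a set topology) MinSpec)"
  shows "hermite_ring TYPE('a)"
  unfolding hermite_ring_def
proof (intro allI)
  fix a b :: 'a
  obtain d x y u v e where d: "a = x * d" "b = y * d" "d * e = 0" and one: "u * x + v * y + e = 1"
    by (rule bezout_ring_gcd_annihilator[OF bezout])
  obtain g t k y' e' where g: "g = t * y + k * e" "y = y' * g" "e = e' * g"
    using bezout_ring_gcd[OF bezout] by blast
  have g_outside: "g \<notin> P" if "cr_minimal_prime P" "x \<in> P" for P
  proof
    assume "g \<in> P"
    have P: "cr_prime_ideal P"
      using that(1) by (rule minimal_prime_prime)
    then have "u * x + v * y + e \<in> P"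
      using g(2,3) \<open>g \<in> P\<close> \<open>x \<in> P\<close> by (simp add: ideal_add ideal_mult_left prime_ideal_ideal)
    then show False
      using prime_ideal_one[OF P] one by simp
  qed
  obtain c where z: "outside_minimal_primes (x + c * g)"
    by (rule exists_shift_outside_minimal_primes[where x = x and g = g, OF bezout compact])
      (auto simp: g_outside)
  have "(v - u * c * t) * y + (1 - u * c * k) * e + u * (x + c * g) = u * x + v * y + e"
    by (simp add: g(1) algebra_simps)
  then have combination: "(v - u * c * t) * y + (1 - u * c * k) * e + u * (x + c * g) = 1"
    using one by simp
  obtain \<tau> \<alpha> \<beta> where unimodular: "\<alpha> * (y + e * \<tau>) + \<beta> * (x + c * g) = 1"
    by (rule unimodular_shift_outside_minimal_primes[OF dim z combination]) (rule that)
  define b' where "b' = y + e * \<tau>"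
  define a' where "a' = x + c * g - b' * c * t"
  have "d * a' = x * d + c * k * (d * e) - \<tau> * c * t * (d * e)"
    by (simp add: a'_def b'_def g(1) algebra_simps)
  then have "a = d * a'"
    using d by simp
  moreover have "d * b' = y * d + \<tau> * (d * e)"
    by (simp add: b'_def algebra_simps)
  then have "b = d * b'"
    using d by simp
  moreover have "\<beta> * a' + (\<alpha> + \<beta> * c * t) * b' = 1"
    using unimodular by (simp add: a'_def b'_def algebra_simps)
  ultimately show "\<exists>d a' b' u v. a = d * a' \<and> b = d * b' \<and> u * a' + v * b' = 1"
    by blast
qed

section \<open>Primitive \<open>2 \<times> 2\<close> matrices\<close>

lemma shifted_row_outside_minimal_primes:
  fixes a11 a12 a21 a22 :: "'a::comm_ring_1"
  assumes bezout: "bezout_ring TYPE('a)"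
    and compact: "compact_space (subtopology (zariski_topology :: 'a set topology) MinSpec)"
    and primitive: "l11 * a11 + l12 * a12 + l21 * a21 + l22 * a22 = 1"
  obtains b where "\<And>P. cr_minimal_prime P \<Longrightarrow> a11 + b * a21 \<in> P \<Longrightarrow> a12 + b * a22 \<in> P \<Longrightarrow> False"
proof -
  obtain r u v x y where r: "r = u * a11 + v * a12" "a11 = x * r" "a12 = y * r"
    using bezout_ring_gcd[OF bezout] by blast
  obtain b N where ann: "r ^ N * b = 0" and b: "\<And>P. cr_minimal_prime P \<Longrightarrow> r \<in> P \<Longrightarrow> b \<notin> P"
    by (rule power_annihilator_outside_minimal_primes[OF bezout compact, of r]) (rule that)
  have False if "cr_minimal_prime P" and g: "a11 + b * a21 \<in> P" "a12 + b * a22 \<in> P" for P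
  proof -
    have P: "cr_prime_ideal P"
      using that(1) by (rule minimal_prime_prime)
    note ideal = prime_ideal_ideal[OF P]
    show False
    proof (cases "r \<in> P")
      case True
      then have "a11 \<in> P" "a12 \<in> P" "b \<notin> P"
        using r(2,3) b[OF that(1)] by (simp_all add: ideal_mult_left[OF ideal])
      moreover have "(a11 + b * a21) - a11 \<in> P" "(a12 + b * a22) - a12 \<in> P"
        using g \<open>a11 \<in> P\<close> \<open>a12 \<in> P\<close> by (simp_all only: ideal_diff[OF ideal])
      ultimately have "a21 \<in> P" "a22 \<in> P"
        by (simp_all add: prime_ideal_mult_iff[OF P])
      then have "l11 * a11 + l12 * a12 + l21 * a21 + l22 * a22 \<in> P"
        using \<open>a11 \<in> P\<close> \<open>a12 \<in> P\<close> by (simp add: ideal_add ideal_mult_left ideal)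
      then show False
        using primitive prime_ideal_one[OF P] by simp
    next
      case False
      have "r ^ N * b \<in> P"
        using ann prime_ideal_zero[OF P] by simp
      then have "b \<in> P"
        using False by (simp add: prime_ideal_mult_iff[OF P] prime_ideal_power_iff[OF P])
      then have "(a11 + b * a21) - b * a21 \<in> P" "(a12 + b * a22) - b * a22 \<in> P"
        using g by (simp_all only: ideal_diff[OF ideal] ideal_mult_right[OF ideal])
      then have "u * a11 + v * a12 \<in> P"
        by (simp add: ideal_add ideal_mult_left ideal)
      then show False
        using False r(1) by simp
    qed
  qed
  then show ?thesis
    using that by blast
qed

text \<open>The column \<open>(s, t) = (c1, c2) + \<tau> (-g2, g1)\<close> keeps the pairing with the shifted first row
  equal to \<open>x\<close>, and the stable-range step chooses \<open>\<tau>\<close> so that the second row pairs to a unit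
  modulo \<open>x\<close>.\<close>

lemma primitive_2x2_represents_one_if_row_factor:
  fixes a11 a12 a21 a22 :: "'a::comm_ring_1"
  assumes dim: "krull_dim_le_one TYPE('a)"
    and primitive: "l11 * a11 + l12 * a12 + l21 * a21 + l22 * a22 = 1"
    and x: "outside_minimal_primes x"
    and g: "a11 + b * a21 = x * g1" "a12 + b * a22 = x * g2" and c: "c1 * g1 + c2 * g2 = 1"
  obtains p q s t where "p * (a11 * s + a12 * t) + q * (a21 * s + a22 * t) = 1"
proof -
  define y where "y = a21 * c1 + a22 * c2"
  define w where "w = - a21 * g2 + a22 * g1"
  have "y * g1 - w * c2 = a21 * (c1 * g1 + c2 * g2)" "y * g2 + w * c1 = a22 * (c1 * g1 + c2 * g2)"
    by (simp_all add: y_def w_def algebra_simps)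
  then have a2: "a21 = y * g1 - w * c2" "a22 = y * g2 + w * c1"
    by (simp_all add: c)
  have a1: "a11 = x * g1 - b * a21" "a12 = x * g2 - b * a22"
    using g by (simp_all add: algebra_simps)
  have "1 = x * (l11 * g1 + l12 * g2) + (l21 - l11 * b) * a21 + (l22 - l12 * b) * a22"
    unfolding primitive[symmetric] by (simp add: a1 algebra_simps)
  also have "\<dots> = ((l21 - l11 * b) * g1 + (l22 - l12 * b) * g2) * y
      + ((l22 - l12 * b) * c1 - (l21 - l11 * b) * c2) * w + (l11 * g1 + l12 * g2) * x"
    by (simp add: a2 algebra_simps)
  finally have combination: "((l21 - l11 * b) * g1 + (l22 - l12 * b) * g2) * y
      + ((l22 - l12 * b) * c1 - (l21 - l11 * b) * c2) * w + (l11 * g1 + l12 * g2) * x = 1"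
    by simp
  obtain \<tau> \<alpha> \<beta> where unimodular: "\<alpha> * (y + w * \<tau>) + \<beta> * x = 1"
    by (rule unimodular_shift_outside_minimal_primes[OF dim x combination]) (rule that)
  define s where "s = c1 - g2 * \<tau>"
  define t where "t = c2 + g1 * \<tau>"
  have "(a11 + b * a21) * s + (a12 + b * a22) * t = x * (c1 * g1 + c2 * g2)"
    unfolding g s_def t_def by (simp add: algebra_simps)
  then have row1: "(a11 + b * a21) * s + (a12 + b * a22) * t = x"
    by (simp add: c)
  have row2: "a21 * s + a22 * t = y + w * \<tau>"
    unfolding y_def w_def s_def t_def by (simp add: algebra_simps)
  have "\<beta> * (a11 * s + a12 * t) + (\<beta> * b + \<alpha>) * (a21 * s + a22 * t)
      = \<beta> * ((a11 + b * a21) * s + (a12 + b * a22) * t) + \<alpha> * (a21 * s + a22 * t)"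
    by (simp add: algebra_simps)
  also have "\<dots> = \<beta> * x + \<alpha> * (y + w * \<tau>)"
    by (simp only: row1 row2)
  also have "\<dots> = 1"
    using unimodular by (simp add: algebra_simps)
  finally show ?thesis
    by (rule that)
qed

lemma primitive_2x2_represents_one:
  fixes a11 a12 a21 a22 :: "'a::comm_ring_1"
  assumes bezout: "bezout_ring TYPE('a)" and dim: "krull_dim_le_one TYPE('a)"
    and compact: "compact_space (subtopology (zariski_topology :: 'a set topology) MinSpec)"
    and primitive: "l11 * a11 + l12 * a12 + l21 * a21 + l22 * a22 = 1"
  obtains p q s t where "p * (a11 * s + a12 * t) + q * (a21 * s + a22 * t) = 1"
proof -
  obtain b where b: "\<And>P. cr_minimal_prime P \<Longrightarrow> a11 + b * a21 \<in> P \<Longrightarrow> a12 + b * a22 \<in> P \<Longrightarrow> False"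
    by (rule shifted_row_outside_minimal_primes[OF bezout compact primitive]) (rule that)
  obtain x g1 g2 c1 c2 where g: "a11 + b * a21 = x * g1" "a12 + b * a22 = x * g2"
    and c: "c1 * g1 + c2 * g2 = 1"
    by (rule hermite_ringE[OF bezout_krull_dim_le_one_hermite[OF bezout dim compact]])
  have "outside_minimal_primes x"
    unfolding outside_minimal_primes_def
  proof (intro allI impI notI)
    fix P assume P: "cr_minimal_prime P" "x \<in> P"
    then have "a11 + b * a21 \<in> P" "a12 + b * a22 \<in> P"
      unfolding g by (simp_all add: ideal_mult_right prime_ideal_ideal minimal_prime_prime)
    then show False
      using b[OF P(1)] by blast
  qed
  then show ?thesis
    using primitive_2x2_represents_one_if_row_factor[OF dim primitive _ g c] that by blast
qed

section \<open>Primitive matrices represent one\<close>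

text \<open>In this section an \<open>m \<times> n\<close> matrix is a function on the indices \<open>i < m\<close>, \<open>j < n\<close>.\<close>

definition primitive_matrix :: "nat \<Rightarrow> nat \<Rightarrow> (nat \<Rightarrow> nat \<Rightarrow> 'a::comm_ring_1) \<Rightarrow> bool" where
  "primitive_matrix m n A \<longleftrightarrow> (\<exists>l. (\<Sum>i<m. \<Sum>j<n. l i j * A i j) = 1)"

definition bilinear_form :: "nat \<Rightarrow> nat \<Rightarrow> (nat \<Rightarrow> 'a::comm_ring_1) \<Rightarrow> (nat \<Rightarrow> nat \<Rightarrow> 'a) \<Rightarrow> (nat \<Rightarrow> 'a) \<Rightarrow> 'a" where
  "bilinear_form m n u A v = (\<Sum>i<m. \<Sum>j<n. u i * A i j * v j)"

definition primitive_matrices_represent_one :: "'a::comm_ring_1 itself \<Rightarrow> nat \<Rightarrow> nat \<Rightarrow> bool" where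
  "primitive_matrices_represent_one _ m n \<longleftrightarrow>
     (\<forall>A :: nat \<Rightarrow> nat \<Rightarrow> 'a. primitive_matrix m n A \<longrightarrow> (\<exists>u v. bilinear_form m n u A v = 1))"

lemma sum_lessThan_2: "(\<Sum>i<2. f i) = f 0 + f (1::nat)"
  by (simp add: numeral_2_eq_2)

lemma primitive_matrices_represent_one_transpose:
  assumes "primitive_matrices_represent_one TYPE('a::comm_ring_1) m n"
  shows "primitive_matrices_represent_one TYPE('a) n m"
  unfolding primitive_matrices_represent_one_def
proof (intro allI impI)
  fix A :: "nat \<Rightarrow> nat \<Rightarrow> 'a" assume "primitive_matrix n m A"
  then obtain l where "(\<Sum>i<n. \<Sum>j<m. l i j * A i j) = 1"
    unfolding primitive_matrix_def by blast
  then have "(\<Sum>i<m. \<Sum>j<n. l j i * A j i) = 1"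
    by (subst sum.swap) simp
  then have "primitive_matrix m n (\<lambda>i j. A j i)"
    unfolding primitive_matrix_def by (intro exI[where x = "\<lambda>i j. l j i"])
  then obtain u v where "(\<Sum>i<m. \<Sum>j<n. u i * A j i * v j) = 1"
    using assms unfolding primitive_matrices_represent_one_def bilinear_form_def by blast
  then have "bilinear_form n m v A u = 1"
    unfolding bilinear_form_def by (subst (asm) sum.swap) (simp add: mult_ac)
  then show "\<exists>u v. bilinear_form n m u A v = 1"
    by blast
qed

lemma primitive_matrices_represent_one_row: "primitive_matrices_represent_one TYPE('a::comm_ring_1) 1 n"
  unfolding primitive_matrices_represent_one_def
proof (intro allI impI)
  fix A :: "nat \<Rightarrow> nat \<Rightarrow> 'a" assume "primitive_matrix 1 n A"
  then obtain l :: "nat \<Rightarrow> nat \<Rightarrow> 'a" where "(\<Sum>j<n. l 0 j * A 0 j) = 1"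
    unfolding primitive_matrix_def by auto
  then have "bilinear_form 1 n (\<lambda>_. 1) A (l 0) = 1"
    unfolding bilinear_form_def by (simp add: mult_ac)
  then show "\<exists>u v. bilinear_form 1 n u A v = 1"
    by blast
qed

lemma primitive_matrices_represent_one_2x2:
  assumes bezout: "bezout_ring TYPE('a::comm_ring_1)" and dim: "krull_dim_le_one TYPE('a)"
    and compact: "compact_space (subtopology (zariski_topology :: 'a set topology) MinSpec)"
  shows "primitive_matrices_represent_one TYPE('a) 2 2"
  unfolding primitive_matrices_represent_one_def
proof (intro allI impI)
  fix A :: "nat \<Rightarrow> nat \<Rightarrow> 'a" assume "primitive_matrix 2 2 A"
  then obtain l :: "nat \<Rightarrow> nat \<Rightarrow> 'a" where "l 0 0 * A 0 0 + l 0 1 * A 0 1 + l 1 0 * A 1 0 + l 1 1 * A 1 1 = 1"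
    unfolding primitive_matrix_def sum_lessThan_2 by (auto simp: add.assoc)
  then obtain p q s t where "p * (A 0 0 * s + A 0 1 * t) + q * (A 1 0 * s + A 1 1 * t) = 1"
    by (rule primitive_2x2_represents_one[OF bezout dim compact]) (rule that)
  then have "bilinear_form 2 2 (\<lambda>i. if i = 0 then p else q) A (\<lambda>j. if j = 0 then s else t) = 1"
    unfolding bilinear_form_def sum_lessThan_2 by (simp add: algebra_simps)
  then show "\<exists>u v. bilinear_form 2 2 u A v = 1"
    by blast
qed

text \<open>Contracting the first \<open>m\<close> rows of \<open>A\<close> to the single row \<open>u A\<close> preserves primitivity when these
  rows are \<open>c B\<close> with \<open>u B v = 1\<close>: the pairing of \<open>u A\<close> with \<open>v\<close> is then \<open>c\<close> itself.\<close>

lemma primitive_matrix_contract_rows: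
  fixes A :: "nat \<Rightarrow> nat \<Rightarrow> 'a::comm_ring_1"
  assumes "primitive_matrix (Suc m) n A"
    and AB: "\<And>i j. i < m \<Longrightarrow> j < n \<Longrightarrow> A i j = c * B i j" and uv: "bilinear_form m n u B v = 1"
  shows "primitive_matrix 2 n (\<lambda>i j. if i = 0 then \<Sum>k<m. u k * A k j else A m j)"
proof -
  obtain l where l: "(\<Sum>i<Suc m. \<Sum>j<n. l i j * A i j) = 1"
    using assms(1) unfolding primitive_matrix_def by blast
  define X where "X = (\<Sum>i<m. \<Sum>j<n. l i j * B i j)"
  have "(\<Sum>i<m. \<Sum>j<n. l i j * A i j) = c * X"
    unfolding X_def sum_distrib_left by (intro sum.cong refl) (simp add: AB mult_ac)
  moreover have "c = c * bilinear_form m n u B v"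
    using uv by simp
  also have "\<dots> = (\<Sum>j<n. (\<Sum>k<m. u k * A k j) * v j)"
    unfolding bilinear_form_def sum_distrib_left sum_distrib_right
    by (subst sum.swap) (intro sum.cong refl, simp add: AB mult_ac)
  ultimately have combination: "(\<Sum>j<n. (\<Sum>k<m. u k * A k j) * v j) * X + (\<Sum>j<n. l m j * A m j) = 1"
    using l by simp
  have "(\<Sum>j<n. (\<Sum>k<m. u k * A k j) * v j) * X = (\<Sum>j<n. (v j * X) * (\<Sum>k<m. u k * A k j))"
    by (simp add: sum_distrib_left sum_distrib_right mult_ac)
  then have "(\<Sum>i<(2::nat). \<Sum>j<n. (if i = 0 then v j * X else l m j)
      * (if i = 0 then \<Sum>k<m. u k * A k j else A m j)) = 1"
    using combination by (simp add: sum_lessThan_2)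
  then show ?thesis
    unfolding primitive_matrix_def by (intro exI[where x = "\<lambda>i j. if i = 0 then v j * X else l m j"])
qed

lemma bilinear_form_contract_rows:
  "bilinear_form (Suc m) n (\<lambda>i. if i < m then w 0 * u i else w 1) A v
    = bilinear_form 2 n w (\<lambda>i j. if i = 0 then \<Sum>k<m. u k * A k j else A m j) v"
proof -
  have "(\<Sum>i<m. \<Sum>j<n. w 0 * u i * A i j * v j) = (\<Sum>j<n. w 0 * (\<Sum>k<m. u k * A k j) * v j)"
    by (subst sum.swap) (simp add: sum_distrib_left sum_distrib_right mult_ac)
  then show ?thesis
    unfolding bilinear_form_def sum_lessThan_2 by (simp add: mult_ac)
qed

lemma primitive_matrices_represent_one_add_row:
  assumes hermite: "hermite_ring TYPE('a::comm_ring_1)"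
    and two: "primitive_matrices_represent_one TYPE('a) 2 n"
    and IH: "primitive_matrices_represent_one TYPE('a) m n"
  shows "primitive_matrices_represent_one TYPE('a) (Suc m) n"
  unfolding primitive_matrices_represent_one_def
proof (intro allI impI)
  fix A :: "nat \<Rightarrow> nat \<Rightarrow> 'a" assume A: "primitive_matrix (Suc m) n A"
  show "\<exists>u v. bilinear_form (Suc m) n u A v = 1"
  proof (cases "m = 0")
    case True
    then have "primitive_matrices_represent_one TYPE('a) (Suc m) n"
      using primitive_matrices_represent_one_row by simp
    then show ?thesis
      using A unfolding primitive_matrices_represent_one_def by blast
  next
    case False
    moreover have "n \<noteq> 0"
      using A unfolding primitive_matrix_def by (rule contrapos_pn) simp
    ultimately have "{..<m} \<times> {..<n} \<noteq> {}"
      by auto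
    then obtain c B w where AB: "\<And>s. s \<in> {..<m} \<times> {..<n} \<Longrightarrow> (\<lambda>(i, j). A i j) s = c * B s"
      and "(\<Sum>s\<in>{..<m} \<times> {..<n}. w s * B s) = 1"
      by (rule hermite_common_factor[OF hermite finite_SigmaI[OF finite_lessThan finite_lessThan]])
        (rule that)
    then have "primitive_matrix m n (\<lambda>i j. B (i, j))"
      unfolding primitive_matrix_def sum.cartesian_product by (intro exI[where x = "\<lambda>i j. w (i, j)"]) simp
    then obtain u v where uv: "bilinear_form m n u (\<lambda>i j. B (i, j)) v = 1"
      using IH unfolding primitive_matrices_represent_one_def by blast
    have "primitive_matrix 2 n (\<lambda>i j. if i = 0 then \<Sum>k<m. u k * A k j else A m j)"
      using AB by (intro primitive_matrix_contract_rows[OF A _ uv]) auto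
    then obtain w' v' where "bilinear_form 2 n w' (\<lambda>i j. if i = 0 then \<Sum>k<m. u k * A k j else A m j) v' = 1"
      using two unfolding primitive_matrices_represent_one_def by blast
    then show ?thesis
      unfolding bilinear_form_contract_rows[symmetric] by blast
  qed
qed

lemma primitive_matrices_represent_one_if_2x2:
  assumes hermite: "hermite_ring TYPE('a::comm_ring_1)"
    and two: "primitive_matrices_represent_one TYPE('a) 2 2"
  shows "primitive_matrices_represent_one TYPE('a) m n"
proof -
  have rows: "primitive_matrices_represent_one TYPE('a) m k"
    if "primitive_matrices_represent_one TYPE('a) 2 k" for m k
  proof (induction m)
    case 0
    show ?case
      by (simp add: primitive_matrices_represent_one_def primitive_matrix_def)
  next
    case (Suc m)
    show ?case
      by (rule primitive_matrices_represent_one_add_row[OF hermite that Suc.IH])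
  qed
  have "primitive_matrices_represent_one TYPE('a) n 2"
    by (rule rows[OF two])
  then show ?thesis
    by (rule rows[OF primitive_matrices_represent_one_transpose])
qed

section \<open>Invertible matrices\<close>

lemma invertible_matI:
  assumes "P \<in> carrier_mat n n" "P' \<in> carrier_mat n n" "P * P' = 1\<^sub>m n" "P' * P = 1\<^sub>m n"
  shows "invertible_mat P"
  using assms unfolding invertible_mat_def inverts_mat_def by auto

lemma invertible_matE:
  assumes "invertible_mat P" "P \<in> carrier_mat n n"
  obtains P' where "P' \<in> carrier_mat n n" "P * P' = 1\<^sub>m n" "P' * P = 1\<^sub>m n"
proof -
  obtain P' where right: "P * P' = 1\<^sub>m n" and left: "P' * P = 1\<^sub>m (dim_row P')"
    using assms unfolding invertible_mat_def inverts_mat_def by auto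
  have "dim_col P' = n"
    using arg_cong[OF right, of dim_col] by simp
  moreover have "dim_row P' = n"
    using arg_cong[OF left, of dim_col] assms(2) by simp
  ultimately show ?thesis
    using that right left by auto
qed

lemma invertible_mat_one: "invertible_mat (1\<^sub>m n)"
  by (rule invertible_matI[of _ n "1\<^sub>m n"]) auto

lemma invertible_mat_mult:
  assumes P: "P \<in> carrier_mat n n" "invertible_mat P" and Q: "Q \<in> carrier_mat n n" "invertible_mat Q"
  shows "invertible_mat (P * Q)"
proof -
  obtain P' where P': "P' \<in> carrier_mat n n" "P * P' = 1\<^sub>m n" "P' * P = 1\<^sub>m n"
    using invertible_matE[OF P(2,1)] by blast
  obtain Q' where Q': "Q' \<in> carrier_mat n n" "Q * Q' = 1\<^sub>m n" "Q' * Q = 1\<^sub>m n"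
    using invertible_matE[OF Q(2,1)] by blast
  have "Q * (Q' * P') = P'"
    using assoc_mult_mat[of Q n n Q' n P' n] Q Q' P' by simp
  then have right: "P * Q * (Q' * P') = 1\<^sub>m n"
    using assoc_mult_mat[of P n n Q n "Q' * P'" n] P Q Q' P' by simp
  have "P' * (P * Q) = Q"
    using assoc_mult_mat[of P' n n P n Q n] P Q P' by simp
  then have left: "Q' * P' * (P * Q) = 1\<^sub>m n"
    using assoc_mult_mat[of Q' n n P' n "P * Q" n] P Q Q' P' by simp
  show ?thesis
    using P Q P' Q' right left by (intro invertible_matI[of _ n "Q' * P'"]) auto
qed

lemma invertible_mat_transpose:
  fixes P :: "'a::comm_semiring_1 mat"
  assumes P: "P \<in> carrier_mat n n" "invertible_mat P"
  shows "invertible_mat (transpose_mat P)"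
proof -
  obtain P' where P': "P' \<in> carrier_mat n n" "P * P' = 1\<^sub>m n" "P' * P = 1\<^sub>m n"
    using invertible_matE[OF P(2,1)] by blast
  have "transpose_mat P * transpose_mat P' = transpose_mat (P' * P)"
    "transpose_mat P' * transpose_mat P = transpose_mat (P * P')"
    by (simp_all add: transpose_mult[OF P'(1) P(1)] transpose_mult[OF P(1) P'(1)])
  then have "transpose_mat P * transpose_mat P' = 1\<^sub>m n" "transpose_mat P' * transpose_mat P = 1\<^sub>m n"
    using P'(2,3) by simp_all
  then show ?thesis
    using P P' by (intro invertible_matI[of _ n "transpose_mat P'"]) auto
qed

lemma invertible_mat_four_block_diag:
  assumes A: "A \<in> carrier_mat a a" "invertible_mat A" and B: "B \<in> carrier_mat b b" "invertible_mat B"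
  shows "invertible_mat (four_block_mat A (0\<^sub>m a b) (0\<^sub>m b a) B)"
proof -
  obtain A' where A': "A' \<in> carrier_mat a a" "A * A' = 1\<^sub>m a" "A' * A = 1\<^sub>m a"
    using invertible_matE[OF A(2,1)] by blast
  obtain B' where B': "B' \<in> carrier_mat b b" "B * B' = 1\<^sub>m b" "B' * B = 1\<^sub>m b"
    using invertible_matE[OF B(2,1)] by blast
  show ?thesis
    using A B A' B'
    by (intro invertible_matI[of _ "a + b" "four_block_mat A' (0\<^sub>m a b) (0\<^sub>m b a) B'"])
      (auto simp: mult_four_block_mat[of _ a a _ b _ b _ _ a _ b])
qed

lemma mult_mat_assoc_inner:
  assumes "E \<in> carrier_mat a a" "P \<in> carrier_mat a a" "B \<in> carrier_mat a b"
    "Q \<in> carrier_mat b b" "F \<in> carrier_mat b b"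
  shows "E * P * B * (Q * F) = E * (P * B * Q) * F"
  using assms by (simp add: assoc_mult_mat[of _ a a _ a _ b] assoc_mult_mat[of _ a b _ b _ b]
      assoc_mult_mat[of _ a a _ b _ b])

lemma invertible_mat_2x2:
  fixes a b c d :: "'a::comm_ring_1"
  assumes "a * d - b * c = 1"
  shows "invertible_mat (mat 2 2 (\<lambda>(i, j). if i = 0 then if j = 0 then a else b else if j = 0 then c else d))"
    (is "invertible_mat ?M")
proof -
  let ?M' = "mat 2 2 (\<lambda>(i, j). if i = 0 then if j = 0 then d else - b else if j = 0 then - c else a)"
  have "?M * ?M' = 1\<^sub>m 2" "?M' * ?M = 1\<^sub>m 2"
    using assms by (rule_tac [!] eq_matI)
      (auto simp: scalar_prod_def atLeast0LessThan numeral_2_eq_2 less_Suc_eq algebra_simps)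
  then show ?thesis
    by (intro invertible_matI[of _ 2 ?M']) auto
qed

section \<open>Completing a unimodular row\<close>

text \<open>The extension is \<open>diag(T, I) diag(1, P)\<close> with \<open>T\<close> the \<open>2 \<times> 2\<close> matrix of determinant one and
  first row \<open>(p, c)\<close>; its first row is \<open>p (1, 0) + c (0, r)\<close> for the first row \<open>r\<close> of \<open>P\<close>.\<close>

lemma invertible_mat_extend_first_row:
  fixes P :: "'a::comm_ring_1 mat"
  assumes P: "P \<in> carrier_mat (Suc k) (Suc k)" "invertible_mat P" and unimodular: "p * \<alpha> + c * \<beta> = 1"
  shows "\<exists>P' \<in> carrier_mat (Suc (Suc k)) (Suc (Suc k)). invertible_mat P' \<and>
    (\<forall>j < Suc (Suc k). P' $$ (0, j) = (if j = 0 then p else c * P $$ (0, j - 1)))"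
proof -
  define T2 :: "'a mat" where
    "T2 = mat 2 2 (\<lambda>(i, j). if i = 0 then if j = 0 then p else c else if j = 0 then - \<beta> else \<alpha>)"
  define T where "T = four_block_mat T2 (0\<^sub>m 2 k) (0\<^sub>m k 2) (1\<^sub>m k)"
  define E where "E = four_block_mat (1\<^sub>m 1) (0\<^sub>m 1 (Suc k)) (0\<^sub>m (Suc k) 1) P"
  have "p * \<alpha> - c * - \<beta> = 1"
    using unimodular by simp
  then have T: "T \<in> carrier_mat (Suc (Suc k)) (Suc (Suc k))" "invertible_mat T"
    unfolding T_def T2_def by (auto intro!: invertible_mat_four_block_diag invertible_mat_2x2 invertible_mat_one)
  have E: "E \<in> carrier_mat (Suc (Suc k)) (Suc (Suc k))" "invertible_mat E"
    unfolding E_def using P by (auto intro!: invertible_mat_four_block_diag invertible_mat_one)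
  have "(T * E) $$ (0, j) = (if j = 0 then p else c * P $$ (0, j - 1))" if "j < Suc (Suc k)" for j
  proof -
    have "(T * E) $$ (0, j) = (\<Sum>l<Suc (Suc k). T $$ (0, l) * E $$ (l, j))"
      using T E that by (simp add: scalar_prod_def atLeast0LessThan)
    also have "\<dots> = p * E $$ (0, j) + c * E $$ (1, j)"
      by (simp add: T_def T2_def sum.lessThan_Suc_shift del: sum.lessThan_Suc)
    also have "\<dots> = (if j = 0 then p else c * P $$ (0, j - 1))"
      using that P by (cases j) (auto simp: E_def)
    finally show ?thesis .
  qed
  then show ?thesis
    using T E by (intro bexI[of _ "T * E"]) (auto intro: invertible_mat_mult)
qed

lemma unimodular_row_completion:
  fixes u w :: "nat \<Rightarrow> 'a::comm_ring_1"
  assumes hermite: "hermite_ring TYPE('a)"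
  shows "(\<Sum>i<m. u i * w i) = 1 \<Longrightarrow> \<exists>P \<in> carrier_mat m m. invertible_mat P \<and> (\<forall>j<m. P $$ (0, j) = u j)"
proof (induction m arbitrary: u w)
  case (Suc k)
  show ?case
  proof (cases k)
    case 0
    then have "u 0 * w 0 = 1"
      using Suc.prems by simp
    then have "mat 1 1 (\<lambda>_. u 0) * mat 1 1 (\<lambda>_. w 0) = 1\<^sub>m 1"
      "mat 1 1 (\<lambda>_. w 0) * mat 1 1 (\<lambda>_. u 0) = 1\<^sub>m 1"
      by (rule_tac [!] eq_matI) (auto simp: scalar_prod_def mult.commute)
    then have "invertible_mat (mat 1 1 (\<lambda>_. u 0))"
      by (intro invertible_matI[of _ 1 "mat 1 1 (\<lambda>_. w 0)"]) auto
    then show ?thesis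
      using 0 by (intro bexI[of _ "mat 1 1 (\<lambda>_. u 0)"]) auto
  next
    case (Suc k')
    obtain c t l where t: "\<And>i. i \<in> {..<k} \<Longrightarrow> u (Suc i) = c * t i" and l: "(\<Sum>i\<in>{..<k}. l i * t i) = 1"
      by (rule hermite_common_factor[OF hermite, of "{..<k}" "\<lambda>i. u (Suc i)"]) (use Suc in auto)
    have "(\<Sum>i<k. t i * l i) = 1"
      using l by (simp add: mult.commute)
    then obtain P where P: "P \<in> carrier_mat k k" "invertible_mat P" and row_P: "\<And>j. j < k \<Longrightarrow> P $$ (0, j) = t j"
      using Suc.IH by blast
    have "1 = u 0 * w 0 + (\<Sum>i<k. u (Suc i) * w (Suc i))"
      using Suc.prems by (simp add: sum.lessThan_Suc_shift del: sum.lessThan_Suc)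
    also have "(\<Sum>i<k. u (Suc i) * w (Suc i)) = c * (\<Sum>i<k. t i * w (Suc i))"
      unfolding sum_distrib_left using t by (intro sum.cong) (auto simp: mult.assoc)
    finally have unimodular: "u 0 * w 0 + c * (\<Sum>i<k. t i * w (Suc i)) = 1"
      by simp
    obtain P' where "P' \<in> carrier_mat (Suc k) (Suc k)" "invertible_mat P'"
      and "\<forall>j < Suc k. P' $$ (0, j) = (if j = 0 then u 0 else c * P $$ (0, j - 1))"
      using invertible_mat_extend_first_row[of P k', OF _ P(2) unimodular] P(1) Suc by auto
    moreover have "(if j = 0 then u 0 else c * P $$ (0, j - 1)) = u j" if "j < Suc k" for j
      using that row_P t by (cases j) auto
    ultimately show ?thesis
      by auto
  qed
qed simp

section \<open>Diagonalisation\<close>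

lemma uminus_zero_mat [simp]: "- (0\<^sub>m k l) = (0\<^sub>m k l :: 'a::group_add mat)"
  by (rule eq_matI) auto

lemma invertible_mat_four_block_lower:
  fixes C :: "'a::comm_ring_1 mat"
  assumes "C \<in> carrier_mat b a"
  shows "invertible_mat (four_block_mat (1\<^sub>m a) (0\<^sub>m a b) C (1\<^sub>m b))"
proof -
  have "- C + C = 0\<^sub>m b a" "C + - C = 0\<^sub>m b a"
    using assms by (rule_tac [!] eq_matI) auto
  then show ?thesis
    using assms
    by (intro invertible_matI[of _ "a + b" "four_block_mat (1\<^sub>m a) (0\<^sub>m a b) (- C) (1\<^sub>m b)"])
      (auto simp: mult_four_block_mat[of _ a a _ b _ b _ _ a _ b])
qed

lemma invertible_mat_four_block_upper:
  fixes B :: "'a::comm_ring_1 mat"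
  assumes "B \<in> carrier_mat a b"
  shows "invertible_mat (four_block_mat (1\<^sub>m a) B (0\<^sub>m b a) (1\<^sub>m b))"
proof -
  have "- B + B = 0\<^sub>m a b" "B + - B = 0\<^sub>m a b"
    using assms by (rule_tac [!] eq_matI) auto
  then show ?thesis
    using assms
    by (intro invertible_matI[of _ "a + b" "four_block_mat (1\<^sub>m a) (- B) (0\<^sub>m b a) (1\<^sub>m b)"])
      (auto simp: mult_four_block_mat[of _ a a _ b _ b _ _ a _ b])
qed

lemma corner_one_elimination:
  fixes H :: "'a::comm_ring_1 mat"
  assumes H: "H \<in> carrier_mat (Suc m) (Suc n)" and corner: "H $$ (0, 0) = 1"
  obtains E F X where "E \<in> carrier_mat (Suc m) (Suc m)" "invertible_mat E"
    "F \<in> carrier_mat (Suc n) (Suc n)" "invertible_mat F" "X \<in> carrier_mat m n"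
    "E * H * F = four_block_mat (1\<^sub>m 1) (0\<^sub>m 1 n) (0\<^sub>m m 1) X"
proof -
  define r where "r = mat 1 n (\<lambda>(_, j). H $$ (0, Suc j))"
  define c where "c = mat m 1 (\<lambda>(i, _). H $$ (Suc i, 0))"
  define H' where "H' = mat m n (\<lambda>(i, j). H $$ (Suc i, Suc j))"
  have carriers: "r \<in> carrier_mat 1 n" "c \<in> carrier_mat m 1" "H' \<in> carrier_mat m n"
    unfolding r_def c_def H'_def by auto
  have H_blocks: "H = four_block_mat (1\<^sub>m 1) r c H'"
    using H corner carriers
    by (intro eq_matI) (auto simp: r_def c_def H'_def less_Suc_eq_0_disj)
  define E where "E = four_block_mat (1\<^sub>m 1) (0\<^sub>m 1 m) (- c) (1\<^sub>m m)"
  define F where "F = four_block_mat (1\<^sub>m 1) (- r) (0\<^sub>m n 1) (1\<^sub>m n)"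
  define X where "X = - c * r + H'"
  have "E * H = four_block_mat (1\<^sub>m 1) r (0\<^sub>m m 1) X"
    unfolding E_def H_blocks X_def using carriers
    by (subst mult_four_block_mat[of _ 1 1 _ m _ m _ _ 1 _ n]) auto
  then have "E * H * F = four_block_mat (1\<^sub>m 1) (0\<^sub>m 1 n) (0\<^sub>m m 1) X"
    unfolding F_def X_def using carriers
    by (simp, subst mult_four_block_mat[of _ 1 1 _ n _ m _ _ 1 _ n]) auto
  moreover have "E \<in> carrier_mat (Suc m) (Suc m)" "invertible_mat E"
    unfolding E_def using carriers by (auto intro: invertible_mat_four_block_lower)
  moreover have "F \<in> carrier_mat (Suc n) (Suc n)" "invertible_mat F"
    unfolding F_def using carriers by (auto intro: invertible_mat_four_block_upper)
  moreover have "X \<in> carrier_mat m n"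
    unfolding X_def using carriers by auto
  ultimately show ?thesis
    using that by blast
qed

lemma primitive_matrix_corner_one:
  fixes A :: "'a::comm_ring_1 mat"
  assumes hermite: "hermite_ring TYPE('a)"
    and represent: "primitive_matrices_represent_one TYPE('a) m n"
    and A: "A \<in> carrier_mat m n" "primitive_matrix m n (\<lambda>i j. A $$ (i, j))"
    and "m \<noteq> 0" "n \<noteq> 0"
  obtains P Q where "P \<in> carrier_mat m m" "invertible_mat P" "Q \<in> carrier_mat n n" "invertible_mat Q"
    "(P * A * Q) $$ (0, 0) = 1"
proof -
  obtain u v where uv: "(\<Sum>i<m. \<Sum>j<n. u i * A $$ (i, j) * v j) = 1"
    using represent A(2) unfolding primitive_matrices_represent_one_def bilinear_form_def by blast
  then have row_sum: "(\<Sum>i<m. u i * (\<Sum>j<n. A $$ (i, j) * v j)) = 1"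
    by (simp add: sum_distrib_left mult.assoc)
  then have "\<exists>P \<in> carrier_mat m m. invertible_mat P \<and> (\<forall>i<m. P $$ (0, i) = u i)"
    by (rule unimodular_row_completion[OF hermite])
  then obtain P where P: "P \<in> carrier_mat m m" "invertible_mat P" and row_P: "\<forall>i<m. P $$ (0, i) = u i"
    by blast
  have "(\<Sum>j<n. v j * (\<Sum>i<m. u i * A $$ (i, j))) = (\<Sum>i<m. \<Sum>j<n. u i * A $$ (i, j) * v j)"
    unfolding sum_distrib_left by (subst sum.swap) (simp only: mult_ac)
  then have "(\<Sum>j<n. v j * (\<Sum>i<m. u i * A $$ (i, j))) = 1"
    using uv by simp
  then have "\<exists>R \<in> carrier_mat n n. invertible_mat R \<and> (\<forall>j<n. R $$ (0, j) = v j)"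
    by (rule unimodular_row_completion[OF hermite])
  then obtain R where R: "R \<in> carrier_mat n n" "invertible_mat R" and row_R: "\<forall>j<n. R $$ (0, j) = v j"
    by blast
  define Q where "Q = transpose_mat R"
  have Q: "Q \<in> carrier_mat n n" "invertible_mat Q"
    unfolding Q_def using R by (auto intro: invertible_mat_transpose)
  have "(P * A * Q) $$ (0, 0) = (\<Sum>i<m. u i * (\<Sum>j<n. A $$ (i, j) * v j))"
    using P A(1) Q row_P row_R \<open>m \<noteq> 0\<close> \<open>n \<noteq> 0\<close>
    by (simp add: Q_def scalar_prod_def atLeast0LessThan)
  then have "(P * A * Q) $$ (0, 0) = 1"
    using row_sum by simp
  then show ?thesis
    using that P Q by blast
qed

lemma matrix_primitive_factor:
  fixes A :: "'a::comm_ring_1 mat"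
  assumes hermite: "hermite_ring TYPE('a)" and A: "A \<in> carrier_mat (Suc m) (Suc n)"
  obtains g A' where "A' \<in> carrier_mat (Suc m) (Suc n)" "A = g \<cdot>\<^sub>m A'"
    "primitive_matrix (Suc m) (Suc n) (\<lambda>i j. A' $$ (i, j))"
proof -
  let ?I = "{..<Suc m} \<times> {..<Suc n}"
  obtain g f l where f: "\<And>s. s \<in> ?I \<Longrightarrow> (\<lambda>(i, j). A $$ (i, j)) s = g * f s"
    and l: "(\<Sum>s\<in>?I. l s * f s) = 1"
    by (rule hermite_common_factor[OF hermite, of ?I "\<lambda>(i, j). A $$ (i, j)"]) auto
  define A' where "A' = mat (Suc m) (Suc n) f"
  have "(\<Sum>i<Suc m. \<Sum>j<Suc n. l (i, j) * A' $$ (i, j)) = (\<Sum>s\<in>?I. l s * f s)"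
    unfolding sum.cartesian_product by (intro sum.cong) (auto simp: A'_def)
  then have "primitive_matrix (Suc m) (Suc n) (\<lambda>i j. A' $$ (i, j))"
    unfolding primitive_matrix_def using l by (intro exI[where x = "\<lambda>i j. l (i, j)"]) simp
  moreover have "A' \<in> carrier_mat (Suc m) (Suc n)" "A = g \<cdot>\<^sub>m A'"
    using A f by (auto simp: A'_def)
  ultimately show ?thesis
    using that by blast
qed

lemma pivot_step:
  fixes A :: "'a::comm_ring_1 mat"
  assumes hermite: "hermite_ring TYPE('a)"
    and represent: "primitive_matrices_represent_one TYPE('a) (Suc m) (Suc n)"
    and A: "A \<in> carrier_mat (Suc m) (Suc n)"
  obtains P Q g D where "P \<in> carrier_mat (Suc m) (Suc m)" "invertible_mat P"
    "Q \<in> carrier_mat (Suc n) (Suc n)" "invertible_mat Q" "D \<in> carrier_mat m n"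
    "P * A * Q = four_block_mat (g \<cdot>\<^sub>m 1\<^sub>m 1) (0\<^sub>m 1 n) (0\<^sub>m m 1) D"
proof -
  obtain g A' where A': "A' \<in> carrier_mat (Suc m) (Suc n)" "A = g \<cdot>\<^sub>m A'"
    and primitive: "primitive_matrix (Suc m) (Suc n) (\<lambda>i j. A' $$ (i, j))"
    by (rule matrix_primitive_factor[OF hermite A])
  obtain P0 Q0 where P0: "P0 \<in> carrier_mat (Suc m) (Suc m)" "invertible_mat P0"
    and Q0: "Q0 \<in> carrier_mat (Suc n) (Suc n)" "invertible_mat Q0" and corner: "(P0 * A' * Q0) $$ (0, 0) = 1"
    by (rule primitive_matrix_corner_one[OF hermite represent A'(1) primitive]) auto
  have "P0 * A' * Q0 \<in> carrier_mat (Suc m) (Suc n)"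
    using P0 A' Q0 by auto
  then obtain E F X where E: "E \<in> carrier_mat (Suc m) (Suc m)" "invertible_mat E"
    and F: "F \<in> carrier_mat (Suc n) (Suc n)" "invertible_mat F" and X: "X \<in> carrier_mat m n"
    and EF: "E * (P0 * A' * Q0) * F = four_block_mat (1\<^sub>m 1) (0\<^sub>m 1 n) (0\<^sub>m m 1) X"
    by (rule corner_one_elimination[OF _ corner])
  have "E * P0 * A * (Q0 * F) = g \<cdot>\<^sub>m (E * P0 * A' * (Q0 * F))"
    using E P0 A' Q0 F
    by (simp add: mult_smult_distrib[of _ "Suc m" "Suc m"]
        mult_smult_assoc_mat[of "E * (P0 * A')" "Suc m" "Suc n" "Q0 * F" "Suc n"])
  also have "\<dots> = g \<cdot>\<^sub>m four_block_mat (1\<^sub>m 1) (0\<^sub>m 1 n) (0\<^sub>m m 1) X"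
    by (simp only: mult_mat_assoc_inner[OF E(1) P0(1) A'(1) Q0(1) F(1)] EF)
  also have "\<dots> = four_block_mat (g \<cdot>\<^sub>m 1\<^sub>m 1) (0\<^sub>m 1 n) (0\<^sub>m m 1) (g \<cdot>\<^sub>m X)"
    using X by (subst smult_four_block_mat) auto
  finally have "E * P0 * A * (Q0 * F) = four_block_mat (g \<cdot>\<^sub>m 1\<^sub>m 1) (0\<^sub>m 1 n) (0\<^sub>m m 1) (g \<cdot>\<^sub>m X)" .
  moreover have "invertible_mat (E * P0)" "invertible_mat (Q0 * F)"
    using invertible_mat_mult E P0 Q0 F by blast+
  ultimately show ?thesis
    using that[of "E * P0" "Q0 * F" "g \<cdot>\<^sub>m X" g] E P0 Q0 F X by simp
qed

lemma diagonal_mat_four_block: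
  fixes D :: "'a::comm_ring_1 mat"
  assumes "diagonal_mat D" "D \<in> carrier_mat m n" "c \<in> carrier_mat 1 1"
  shows "diagonal_mat (four_block_mat c (0\<^sub>m 1 n) (0\<^sub>m m 1) D)"
  using assms unfolding diagonal_mat_def by (auto simp: less_Suc_eq_0_disj) blast

lemma diagonalize_lower_block:
  fixes D :: "'a::comm_ring_1 mat"
  assumes D: "D \<in> carrier_mat m n" and c: "c \<in> carrier_mat 1 1"
    and P: "P \<in> carrier_mat m m" "invertible_mat P" and Q: "Q \<in> carrier_mat n n" "invertible_mat Q"
    and diagonal: "diagonal_mat (P * D * Q)"
  shows "\<exists>P' Q'. P' \<in> carrier_mat (Suc m) (Suc m) \<and> invertible_mat P' \<and>
    Q' \<in> carrier_mat (Suc n) (Suc n) \<and> invertible_mat Q' \<and>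
    diagonal_mat (P' * four_block_mat c (0\<^sub>m 1 n) (0\<^sub>m m 1) D * Q')"
proof (intro exI conjI)
  let ?P' = "four_block_mat (1\<^sub>m 1) (0\<^sub>m 1 m) (0\<^sub>m m 1) P"
  let ?Q' = "four_block_mat (1\<^sub>m 1) (0\<^sub>m 1 n) (0\<^sub>m n 1) Q"
  show "?P' \<in> carrier_mat (Suc m) (Suc m)" "invertible_mat ?P'"
    using P by (auto intro: invertible_mat_four_block_diag invertible_mat_one)
  show "?Q' \<in> carrier_mat (Suc n) (Suc n)" "invertible_mat ?Q'"
    using Q by (auto intro: invertible_mat_four_block_diag invertible_mat_one)
  have "?P' * four_block_mat c (0\<^sub>m 1 n) (0\<^sub>m m 1) D * ?Q' = four_block_mat c (0\<^sub>m 1 n) (0\<^sub>m m 1) (P * D * Q)"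
    using P D Q c
    by (simp add: mult_four_block_mat[of _ 1 1 _ m _ m _ _ 1 _ n] mult_four_block_mat[of _ 1 1 _ n _ m _ _ 1 _ n])
  then show "diagonal_mat (?P' * four_block_mat c (0\<^sub>m 1 n) (0\<^sub>m m 1) D * ?Q')"
    using diagonal_mat_four_block[OF diagonal] P D Q c by simp
qed

lemma diagonalization:
  fixes A :: "'a::comm_ring_1 mat"
  assumes hermite: "hermite_ring TYPE('a)"
    and represent: "\<And>m n. primitive_matrices_represent_one TYPE('a) m n"
  shows "A \<in> carrier_mat m n \<Longrightarrow> \<exists>P Q. P \<in> carrier_mat m m \<and> Q \<in> carrier_mat n n \<and>
    invertible_mat P \<and> invertible_mat Q \<and> diagonal_mat (P * A * Q)"
proof (induction m arbitrary: n A)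
  case 0
  then have "diagonal_mat (1\<^sub>m 0 * A * 1\<^sub>m n)"
    unfolding diagonal_mat_def by simp
  then show ?case
    using invertible_mat_one one_carrier_mat by blast
next
  case (Suc m)
  show ?case
  proof (cases n)
    case 0
    then have "diagonal_mat (1\<^sub>m (Suc m) * A * 1\<^sub>m n)"
      using Suc.prems unfolding diagonal_mat_def by simp
    then show ?thesis
      using invertible_mat_one one_carrier_mat by blast
  next
    case (Suc n')
    then have A: "A \<in> carrier_mat (Suc m) (Suc n')"
      using Suc.prems by simp
    obtain P Q g D where P: "P \<in> carrier_mat (Suc m) (Suc m)" "invertible_mat P"
      and Q: "Q \<in> carrier_mat (Suc n') (Suc n')" "invertible_mat Q" and D: "D \<in> carrier_mat m n'"
      and PAQ: "P * A * Q = four_block_mat (g \<cdot>\<^sub>m 1\<^sub>m 1) (0\<^sub>m 1 n') (0\<^sub>m m 1) D"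
      by (rule pivot_step[OF hermite represent A])
    obtain P' Q' where P': "P' \<in> carrier_mat m m" "invertible_mat P'"
      and Q': "Q' \<in> carrier_mat n' n'" "invertible_mat Q'" and "diagonal_mat (P' * D * Q')"
      using Suc.IH[OF D] by blast
    then have "\<exists>P'' Q''. P'' \<in> carrier_mat (Suc m) (Suc m) \<and> invertible_mat P'' \<and>
        Q'' \<in> carrier_mat (Suc n') (Suc n') \<and> invertible_mat Q'' \<and> diagonal_mat (P'' * (P * A * Q) * Q'')"
      unfolding PAQ by (intro diagonalize_lower_block[OF D _ P' Q']) auto
    then obtain P'' Q'' where P'': "P'' \<in> carrier_mat (Suc m) (Suc m)" "invertible_mat P''"
      and Q'': "Q'' \<in> carrier_mat (Suc n') (Suc n')" "invertible_mat Q''"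
      and "diagonal_mat (P'' * (P * A * Q) * Q'')"
      by blast
    moreover have "P'' * P * A * (Q * Q'') = P'' * (P * A * Q) * Q''"
      by (rule mult_mat_assoc_inner[OF P''(1) P(1) A Q(1) Q''(1)])
    moreover have "invertible_mat (P'' * P)" "invertible_mat (Q * Q'')"
      using invertible_mat_mult P P'' Q Q'' by blast+
    ultimately show ?thesis
      using P P'' Q Q'' Suc by (intro exI[of _ "P'' * P"] exI[of _ "Q * Q''"]) auto
  qed
qed

theorem corollary3p4:
  assumes "bezout_ring TYPE('a::comm_ring_1)"
    and "krull_dim_le_one TYPE('a)"
    and "compact_space (subtopology (zariski_topology :: 'a set topology) MinSpec)"
  shows "kaplansky_ring TYPE('a)"
proof -
  have hermite: "hermite_ring TYPE('a)"
    by (rule bezout_krull_dim_le_one_hermite[OF assms])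
  have "primitive_matrices_represent_one TYPE('a) m n" for m n
    by (rule primitive_matrices_represent_one_if_2x2[OF hermite primitive_matrices_represent_one_2x2[OF assms]])
  then show ?thesis
    unfolding kaplansky_ring_def using diagonalization[OF hermite] by blast
qed

end
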